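(* Let $(P,\le,\mu,\gamma)$ be a preordered heap with target multiplication $\tau(a,b)=\gamma(\mu(\gamma a,\gamma b))$. If $e\in P$ is a left identity or a right identity for $\mu$ (i.e. $\mu(e,a)\simeq a$ for all $a\in P$, or $\mu(a,e)\simeq a$ for all $a\in P$), then $e$ is a double-sided identity for $\mu$ (i.e. $\mu(e,a)\simeq a\simeq\mu(a,e)$ for all $a$) and $\gamma e$ is a double-sided identity for $\tau$ (i.e. $\tau(\gamma e,a)\simeq a\simeq\tau(a,\gamma e)$ for all $a$). Analogously, if $e\in P$ is a left or right identity for $\tau$, then $e$ is a double-sided identity for $\tau$ and $\gamma e$ is a double-sided identity for $\mu$.
   Context: A preordered heap is a structure $(P,\le,\mu,\gamma)$ where $(P,\le)$ is a preorder (reflexive and transitive relation); $\mu\colon P\times P\to P$ (source multiplication) is monotonic in both arguments; $\gamma\colon P\to P$ (involution) is antitone ($a\le b\Rightarrow \gamma b\le\gamma a$); and the following axioms hold: (A1) $\gamma(\gamma(a))=a$ for all $a$; (A2a) $\mu(a,\gamma(\mu(\gamma b,a)))\le b$ for all $a,b\in P$; (A2b) $\mu(\gamma(\mu(a,\gamma b)),a)\le b$ for all $a,b\in P$. For $a,b\in P$, $a\simeq b$ means $a\le b$ and $b\le a$. *)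

theory Defs
  imports Main
begin

text \<open>A preordered heap on the carrier given by the whole type 'a:
  le is a preorder, mu (source multiplication) is monotone in both arguments,
  gamma (involution) is antitone, and axioms (A1), (A2a), (A2b) hold.\<close>

definition preordered_heap ::
  "('a \<Rightarrow> 'a \<Rightarrow> bool) \<Rightarrow> ('a \<Rightarrow> 'a \<Rightarrow> 'a) \<Rightarrow> ('a \<Rightarrow> 'a) \<Rightarrow> bool" where
  "preordered_heap le mu gamma \<longleftrightarrow>
     (\<forall>a. le a a) \<and>
     (\<forall>a b c. le a b \<longrightarrow> le b c \<longrightarrow> le a c) \<and>
     (\<forall>a a' b b'. le a a' \<longrightarrow> le b b' \<longrightarrow> le (mu a b) (mu a' b')) \<and>
     (\<forall>a b. le a b \<longrightarrow> le (gamma b) (gamma a)) \<and>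
     (\<forall>a. gamma (gamma a) = a) \<and>
     (\<forall>a b. le (mu a (gamma (mu (gamma b) a))) b) \<and>
     (\<forall>a b. le (mu (gamma (mu a (gamma b))) a) b)"

definition peq :: "('a \<Rightarrow> 'a \<Rightarrow> bool) \<Rightarrow> 'a \<Rightarrow> 'a \<Rightarrow> bool" where
  "peq le a b \<longleftrightarrow> le a b \<and> le b a"

definition target_mult :: "('a \<Rightarrow> 'a \<Rightarrow> 'a) \<Rightarrow> ('a \<Rightarrow> 'a) \<Rightarrow> 'a \<Rightarrow> 'a \<Rightarrow> 'a" where
  "target_mult mu gamma a b = gamma (mu (gamma a) (gamma b))"

definition left_identity :: "('a \<Rightarrow> 'a \<Rightarrow> bool) \<Rightarrow> ('a \<Rightarrow> 'a \<Rightarrow> 'a) \<Rightarrow> 'a \<Rightarrow> bool" where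
  "left_identity le m e \<longleftrightarrow> (\<forall>a. peq le (m e a) a)"

definition right_identity :: "('a \<Rightarrow> 'a \<Rightarrow> bool) \<Rightarrow> ('a \<Rightarrow> 'a \<Rightarrow> 'a) \<Rightarrow> 'a \<Rightarrow> bool" where
  "right_identity le m e \<longleftrightarrow> (\<forall>a. peq le (m a e) a)"

definition two_sided_identity :: "('a \<Rightarrow> 'a \<Rightarrow> bool) \<Rightarrow> ('a \<Rightarrow> 'a \<Rightarrow> 'a) \<Rightarrow> 'a \<Rightarrow> bool" where
  "two_sided_identity le m e \<longleftrightarrow> (\<forall>a. peq le (m e a) a \<and> peq le a (m a e))"

end

theory Submission
  imports Defs
begin

text \<open>Two symmetries reduce the corollary to a single case. Reversing the arguments of \<open>\<mu>\<close>
  swaps (A2a) and (A2b), hence left and right identities; and \<open>(P, \<ge>, \<tau>, \<gamma>)\<close> is again a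
  preordered heap whose target multiplication is \<open>\<mu>\<close>, which turns statements about \<open>\<tau>\<close> into
  statements about \<open>\<mu>\<close>. What remains is that a left identity \<open>e\<close> of \<open>\<mu>\<close> is a right identity:
  (A2a) gives \<open>\<gamma>(\<mu>(c,e)) \<le> \<mu>(e,\<gamma>(\<mu>(c,e))) \<le> \<gamma> c\<close>, and (A2b) gives
  \<open>\<mu>(c,e) \<le> \<mu>(\<gamma>(\<mu>(e,\<gamma> c)),e) \<le> c\<close>.\<close>

lemma left_identity_converseI:
  "left_identity le m e \<Longrightarrow> left_identity (\<lambda>a b. le b a) m e"
  unfolding left_identity_def peq_def by blast

lemma right_identity_converseI:
  "right_identity le m e \<Longrightarrow> right_identity (\<lambda>a b. le b a) m e"
  unfolding right_identity_def peq_def by blast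

lemma two_sided_identity_converseD:
  "two_sided_identity (\<lambda>a b. le b a) m e \<Longrightarrow> two_sided_identity le m e"
  unfolding two_sided_identity_def peq_def by blast

lemma right_identity_imp_left_identity_swap:
  "right_identity le m e \<Longrightarrow> left_identity le (\<lambda>a b. m b a) e"
  unfolding left_identity_def right_identity_def .

lemma two_sided_identity_swapD:
  "two_sided_identity le (\<lambda>a b. m b a) e \<Longrightarrow> two_sided_identity le m e"
  unfolding two_sided_identity_def peq_def by blast

locale preorder_heap =
  fixes le :: "'a \<Rightarrow> 'a \<Rightarrow> bool" and mu :: "'a \<Rightarrow> 'a \<Rightarrow> 'a" and gamma :: "'a \<Rightarrow> 'a"
  assumes preordered_heap: "preordered_heap le mu gamma"
begin

lemma refl: "le a a"
  and trans [trans]: "le a b \<Longrightarrow> le b c \<Longrightarrow> le a c"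
  and mu_mono: "le a a' \<Longrightarrow> le b b' \<Longrightarrow> le (mu a b) (mu a' b')"
  and gamma_antitone: "le a b \<Longrightarrow> le (gamma b) (gamma a)"
  and gamma_gamma [simp]: "gamma (gamma a) = a"
  and A2a: "le (mu a (gamma (mu (gamma b) a))) b"
  and A2b: "le (mu (gamma (mu a (gamma b))) a) b"
  using preordered_heap unfolding preordered_heap_def by blast+

lemma gamma_le_gamma_iff: "le (gamma a) (gamma b) \<longleftrightarrow> le b a"
  using gamma_antitone[of "gamma a" "gamma b"] gamma_antitone[of b a] by auto

lemma left_identity_imp_two_sided_identity:
  assumes "left_identity le mu e"
  shows "two_sided_identity le mu e"
proof -
  have left: "le (mu e a) a" "le a (mu e a)" for a
    using assms unfolding left_identity_def peq_def by auto
  have "le c (mu c e)" for c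
  proof -
    have "le (gamma (mu c e)) (mu e (gamma (mu c e)))" by (rule left)
    also have "le \<dots> (gamma c)" using A2a[of e "gamma c"] by simp
    finally show ?thesis using gamma_le_gamma_iff by blast
  qed
  moreover have "le (mu c e) c" for c
  proof -
    have "le c (gamma (mu e (gamma c)))"
      using gamma_antitone[OF left(1)[of "gamma c"]] by simp
    then have "le (mu c e) (mu (gamma (mu e (gamma c))) e)" using mu_mono refl by blast
    also have "le \<dots> c" by (rule A2b)
    finally show ?thesis .
  qed
  ultimately show ?thesis
    using left unfolding two_sided_identity_def peq_def by blast
qed

lemma target_mult_mono:
  "le a a' \<Longrightarrow> le b b' \<Longrightarrow> le (target_mult mu gamma a b) (target_mult mu gamma a' b')"
  unfolding target_mult_def by (intro gamma_antitone mu_mono) (simp_all add: gamma_le_gamma_iff)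

lemma target_mult_target_mult: "target_mult (target_mult mu gamma) gamma = mu"
  unfolding target_mult_def by simp

lemma two_sided_identity_target_mult:
  assumes "two_sided_identity le mu e"
  shows "two_sided_identity le (target_mult mu gamma) (gamma e)"
proof -
  have "peq le (gamma (mu e a)) (gamma a)" "peq le (gamma a) (gamma (mu a e))" for a
    using assms gamma_antitone unfolding two_sided_identity_def peq_def by blast+
  then have "peq le (gamma (mu e (gamma a))) a" "peq le a (gamma (mu (gamma a) e))" for a
    by (metis gamma_gamma)+
  then show ?thesis
    unfolding two_sided_identity_def target_mult_def gamma_gamma by blast
qed

end

lemma preorder_heap_swap:
  assumes "preorder_heap le mu gamma"
  shows "preorder_heap le (\<lambda>a b. mu b a) gamma"
  using assms unfolding preorder_heap_def preordered_heap_def by blast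

lemma preorder_heap_target:
  assumes "preorder_heap le mu gamma"
  shows "preorder_heap (\<lambda>a b. le b a) (target_mult mu gamma) gamma"
proof -
  interpret preorder_heap le mu gamma by fact
  have "le b (target_mult mu gamma a (gamma (target_mult mu gamma (gamma b) a)))" for a b
    using gamma_antitone[OF A2a[of "gamma a" "gamma b"]] by (simp add: target_mult_def)
  moreover have "le b (target_mult mu gamma (gamma (target_mult mu gamma a (gamma b))) a)" for a b
    using gamma_antitone[OF A2b[of "gamma a" "gamma b"]] by (simp add: target_mult_def)
  ultimately show ?thesis
    unfolding preorder_heap_def preordered_heap_def
    using refl trans target_mult_mono gamma_antitone gamma_gamma by blast
qed

lemma (in preorder_heap) right_identity_imp_two_sided_identity:
  assumes "right_identity le mu e"
  shows "two_sided_identity le mu e"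
proof -
  have "preorder_heap le (\<lambda>a b. mu b a) gamma"
    by (rule preorder_heap_swap) (rule preorder_heap_axioms)
  from preorder_heap.left_identity_imp_two_sided_identity[OF this
      right_identity_imp_left_identity_swap[OF assms]]
  show ?thesis by (rule two_sided_identity_swapD)
qed

lemma (in preorder_heap) one_sided_identity_imp_two_sided_identity:
  assumes "left_identity le mu e \<or> right_identity le mu e"
  shows "two_sided_identity le mu e \<and> two_sided_identity le (target_mult mu gamma) (gamma e)"
  using assms left_identity_imp_two_sided_identity right_identity_imp_two_sided_identity
    two_sided_identity_target_mult by blast

theorem corollary2:
  fixes le :: "'a \<Rightarrow> 'a \<Rightarrow> bool" and mu :: "'a \<Rightarrow> 'a \<Rightarrow> 'a" and gamma :: "'a \<Rightarrow> 'a"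
  assumes "preordered_heap le mu gamma"
  shows "(\<forall>e. (left_identity le mu e \<or> right_identity le mu e) \<longrightarrow>
            two_sided_identity le mu e \<and> two_sided_identity le (target_mult mu gamma) (gamma e)) \<and>
         (\<forall>e. (left_identity le (target_mult mu gamma) e \<or> right_identity le (target_mult mu gamma) e) \<longrightarrow>
            two_sided_identity le (target_mult mu gamma) e \<and> two_sided_identity le mu (gamma e))"
proof (rule conjI; intro allI impI)
  have heap: "preorder_heap le mu gamma"
    using assms by (rule preorder_heap.intro)
  then have dual: "preorder_heap (\<lambda>a b. le b a) (target_mult mu gamma) gamma"
    by (rule preorder_heap_target)
  show "two_sided_identity le mu e \<and> two_sided_identity le (target_mult mu gamma) (gamma e)"
    if "left_identity le mu e \<or> right_identity le mu e" for e
    using preorder_heap.one_sided_identity_imp_two_sided_identity[OF heap that] .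
  show "two_sided_identity le (target_mult mu gamma) e \<and> two_sided_identity le mu (gamma e)"
    if "left_identity le (target_mult mu gamma) e \<or> right_identity le (target_mult mu gamma) e" for e
  proof -
    have "left_identity (\<lambda>a b. le b a) (target_mult mu gamma) e \<or>
        right_identity (\<lambda>a b. le b a) (target_mult mu gamma) e"
      using that by (auto intro: left_identity_converseI[of le] right_identity_converseI[of le])
    from preorder_heap.one_sided_identity_imp_two_sided_identity[OF dual this]
    have "two_sided_identity (\<lambda>a b. le b a) (target_mult mu gamma) e"
      and "two_sided_identity (\<lambda>a b. le b a) mu (gamma e)"
      unfolding preorder_heap.target_mult_target_mult[OF heap] by auto
    then show ?thesis
      by (auto intro: two_sided_identity_converseD[of le])
  qed
qed

end
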